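(* Let $\mathcal{C}$ be a partition of a finite set $E$ (a covering by pairwise disjoint nonempty sets). Then $SH$, $XH$, $VH$ are closure operators of matroids on $E$, and $\mathcal{I}_{SH}(\mathcal{C})=\mathcal{I}_{XH}(\mathcal{C})=\mathcal{I}_{VH}(\mathcal{C})=\mathcal{I}(\mathcal{C})$ and $\mathcal{L}_{SH}(M(\mathcal{C}))=\mathcal{L}_{XH}(M(\mathcal{C}))=\mathcal{L}_{VH}(M(\mathcal{C}))=\mathcal{L}(M(\mathcal{C}))$.
   Context: For a covering $\mathcal{C}$ of $E$ and $x\in E$: $N(x)=\bigcap\{K\in\mathcal{C}:x\in K\}$. For $X\subseteq E$: $SH(X)=\bigcup\{K\in\mathcal{C}:K\cap X\neq\emptyset\}$, $XH(X)=\{x:N(x)\cap X\neq\emptyset\}$, $VH(X)=\bigcup\{N(x):N(x)\cap X\neq\emptyset\}$. When $H\in\{SH,XH,VH\}$ is the closure operator of a matroid on $E$, $\mathcal{I}_H(\mathcal{C})=\{I\subseteq E:x\notin H(I-\{x\})\ \forall x\in I\}$ is its family of independent sets and $\mathcal{L}_H(M(\mathcal{C}))=\{X:H(X)=X\}$ its set of closed sets. $\mathcal{I}(\mathcal{C})$ is the family of partial transversals of $\mathcal{C}$ (sets of distinct elements $e_1,\dots,e_k$ with $e_j\in K_{i_j}$ for distinct blocks $K_{i_1},\dots,K_{i_k}$), i.e. the independent sets of the transversal matroid $M(\mathcal{C})$, and $\mathcal{L}(M(\mathcal{C}))$ is the set of closed sets of $M(\mathcal{C})$, where $cl(X)=\{a:r(X\cup\{a\})=r(X)\}$.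 *)

theory Defs
  imports "HOL-Library.Disjoint_Sets"
begin

(* A covering C of E is a set of blocks with \<Union>C = E. *)

definition Nbh :: "'a set set \<Rightarrow> 'a \<Rightarrow> 'a set" where
  "Nbh C x = \<Inter>{K \<in> C. x \<in> K}"

definition SH :: "'a set set \<Rightarrow> 'a set \<Rightarrow> 'a set" where
  "SH C X = \<Union>{K \<in> C. K \<inter> X \<noteq> {}}"

definition XH :: "'a set set \<Rightarrow> 'a set \<Rightarrow> 'a set \<Rightarrow> 'a set" where
  "XH C E X = {x \<in> E. Nbh C x \<inter> X \<noteq> {}}"

definition VH :: "'a set set \<Rightarrow> 'a set \<Rightarrow> 'a set \<Rightarrow> 'a set" where
  "VH C E X = \<Union>{Nbh C x | x. x \<in> E \<and> Nbh C x \<inter> X \<noteq> {}}"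

definition matroid_closure :: "'a set \<Rightarrow> ('a set \<Rightarrow> 'a set) \<Rightarrow> bool" where
  "matroid_closure E cl \<longleftrightarrow>
     (\<forall>X. X \<subseteq> E \<longrightarrow> X \<subseteq> cl X \<and> cl X \<subseteq> E) \<and>
     (\<forall>X Y. X \<subseteq> Y \<and> Y \<subseteq> E \<longrightarrow> cl X \<subseteq> cl Y) \<and>
     (\<forall>X. X \<subseteq> E \<longrightarrow> cl (cl X) = cl X) \<and>
     (\<forall>X x y. X \<subseteq> E \<and> x \<in> E \<and> y \<in> E \<and> y \<in> cl (insert x X) \<and> y \<notin> cl X
        \<longrightarrow> x \<in> cl (insert y X))"

definition indep_H :: "'a set \<Rightarrow> ('a set \<Rightarrow> 'a set) \<Rightarrow> 'a set set" where
  "indep_H E H = {I. I \<subseteq> E \<and> (\<forall>x\<in>I. x \<notin> H (I - {x}))}"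

definition closed_H :: "'a set \<Rightarrow> ('a set \<Rightarrow> 'a set) \<Rightarrow> 'a set set" where
  "closed_H E H = {X. X \<subseteq> E \<and> H X = X}"

definition partial_transversal :: "'a set set \<Rightarrow> 'a set \<Rightarrow> bool" where
  "partial_transversal C I \<longleftrightarrow> (\<exists>f. inj_on f I \<and> (\<forall>x\<in>I. f x \<in> C \<and> x \<in> f x))"

definition ptrans :: "'a set set \<Rightarrow> 'a set \<Rightarrow> 'a set set" where
  "ptrans C E = {I. I \<subseteq> E \<and> partial_transversal C I}"

definition trank :: "'a set set \<Rightarrow> 'a set \<Rightarrow> nat" where
  "trank C X = Max {card I | I. I \<subseteq> X \<and> partial_transversal C I}"

definition tcl :: "'a set set \<Rightarrow> 'a set \<Rightarrow> 'a set \<Rightarrow> 'a set" where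
  "tcl C E X = {a \<in> E. trank C (insert a X) = trank C X}"

definition tflats :: "'a set set \<Rightarrow> 'a set \<Rightarrow> 'a set set" where
  "tflats C E = {X. X \<subseteq> E \<and> tcl C E X = X}"

end

theory Submission
  imports Defs
begin

text \<open>For a partition every element x lies in exactly one block, and N(x) is that block.
  Hence XH and VH coincide with SH, which maps X to the union of the blocks meeting X.
  A set is a partial transversal iff no two of its elements share a block, so the rank of
  X in M(C) is the number of blocks meeting X, and adding a to X keeps the rank iff the
  block of a already meets X, i.e. iff a \<in> SH X.\<close>

locale block_partition =
  fixes E :: "'a set" and C :: "'a set set"
  assumes partition: "partition_on E C"
begin

lemma block_unique: "K \<in> C \<Longrightarrow> K' \<in> C \<Longrightarrow> x \<in> K \<Longrightarrow> x \<in> K' \<Longrightarrow> K = K'"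
  using partition_onD2[OF partition] by (meson disjointD disjoint_iff)

lemma block_subset: "K \<in> C \<Longrightarrow> K \<subseteq> E"
  using partition_onD1[OF partition] by blast

lemma block_nonempty: "K \<in> C \<Longrightarrow> K \<noteq> {}"
  using partition_onD3[OF partition] by blast

definition block_of :: "'a \<Rightarrow> 'a set" where
  "block_of x = (THE K. K \<in> C \<and> x \<in> K)"

lemma block_of_eq: "K \<in> C \<Longrightarrow> x \<in> K \<Longrightarrow> block_of x = K"
  unfolding block_of_def by (rule the_equality) (auto dest: block_unique)

lemma block_of_in_blocks: "x \<in> E \<Longrightarrow> block_of x \<in> C"
  and mem_block_of: "x \<in> E \<Longrightarrow> x \<in> block_of x"
  using partition_onD1[OF partition] block_of_eq by blast+

lemma mem_block_of_iff: "x \<in> E \<Longrightarrow> y \<in> E \<Longrightarrow> x \<in> block_of y \<longleftrightarrow> block_of x = block_of y"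
  using block_of_eq block_of_in_blocks mem_block_of by metis

lemma Nbh_eq_block_of: "x \<in> E \<Longrightarrow> Nbh C x = block_of x"
proof -
  assume x: "x \<in> E"
  have "{K \<in> C. x \<in> K} = {block_of x}"
    using block_of_eq block_of_in_blocks[OF x] mem_block_of[OF x] by blast
  then show ?thesis unfolding Nbh_def by simp
qed

lemma SH_eq: "SH C X = {y \<in> E. block_of y \<inter> X \<noteq> {}}"
  unfolding SH_def using block_subset block_of_eq block_of_in_blocks mem_block_of by blast

lemma XH_eq_SH: "XH C E = SH C"
  by (auto simp: fun_eq_iff XH_def SH_eq Nbh_eq_block_of)

lemma VH_eq_SH: "VH C E = SH C"
proof
  fix X
  have "{Nbh C x | x. x \<in> E \<and> Nbh C x \<inter> X \<noteq> {}} = {K \<in> C. K \<inter> X \<noteq> {}}"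
  proof (intro set_eqI iffI)
    fix K assume "K \<in> {K \<in> C. K \<inter> X \<noteq> {}}"
    moreover obtain x where "x \<in> K" using calculation block_nonempty by blast
    ultimately show "K \<in> {Nbh C x | x. x \<in> E \<and> Nbh C x \<inter> X \<noteq> {}}"
      using block_subset block_of_eq Nbh_eq_block_of by fastforce
  qed (auto simp: Nbh_eq_block_of block_of_in_blocks)
  then show "VH C E X = SH C X" unfolding VH_def SH_def by simp
qed

lemma matroid_closure_SH: "matroid_closure E (SH C)"
  unfolding matroid_closure_def
proof (intro conjI allI impI)
  fix X assume "X \<subseteq> E"
  then show "X \<subseteq> SH C X" using mem_block_of by (auto simp: SH_eq)
  show "SH C X \<subseteq> E" by (simp add: SH_eq)
  show "SH C (SH C X) = SH C X"
    using mem_block_of mem_block_of_iff by (fastforce simp: SH_eq)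
next
  fix X Y :: "'a set" assume "X \<subseteq> Y \<and> Y \<subseteq> E"
  then show "SH C X \<subseteq> SH C Y" unfolding SH_def by blast
next
  fix X x y assume "X \<subseteq> E \<and> x \<in> E \<and> y \<in> E \<and> y \<in> SH C (insert x X) \<and> y \<notin> SH C X"
  then show "x \<in> SH C (insert y X)"
    using mem_block_of mem_block_of_iff by (auto simp: SH_eq)
qed

lemma partial_transversal_iff_inj_on_block_of:
  assumes "I \<subseteq> E"
  shows "partial_transversal C I \<longleftrightarrow> inj_on block_of I"
proof
  assume "partial_transversal C I"
  then obtain f where "inj_on f I" and "\<And>x. x \<in> I \<Longrightarrow> f x \<in> C \<and> x \<in> f x"
    unfolding partial_transversal_def by blast
  moreover from this have "\<And>x. x \<in> I \<Longrightarrow> f x = block_of x"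
    using block_of_eq by metis
  ultimately show "inj_on block_of I" using inj_on_cong by blast
next
  assume "inj_on block_of I"
  then show "partial_transversal C I"
    unfolding partial_transversal_def using assms block_of_in_blocks mem_block_of by blast
qed

lemma indep_H_SH: "indep_H E (SH C) = ptrans C E"
proof -
  have shares_block: "x \<in> SH C (I - {x}) \<longleftrightarrow> (\<exists>y\<in>I - {x}. block_of y = block_of x)"
    if "I \<subseteq> E" "x \<in> I" for I x
    using that mem_block_of_iff unfolding SH_eq by blast
  have "(\<forall>x\<in>I. x \<notin> SH C (I - {x})) \<longleftrightarrow> inj_on block_of I" if "I \<subseteq> E" for I
    using that by (auto simp: shares_block inj_on_def)
  then show ?thesis
    unfolding indep_H_def ptrans_def using partial_transversal_iff_inj_on_block_of by blast
qed

lemma trank_eq_card_blocks: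
  assumes X: "X \<subseteq> E" and "finite X"
  shows "trank C X = card (block_of ` X)"
proof -
  let ?ranks = "{card I | I. I \<subseteq> X \<and> partial_transversal C I}"
  have bounded: "n \<le> card (block_of ` X)" if "n \<in> ?ranks" for n
  proof -
    obtain I where I: "n = card I" "I \<subseteq> X" "partial_transversal C I"
      using \<open>n \<in> ?ranks\<close> by blast
    then have "inj_on block_of I"
      using X partial_transversal_iff_inj_on_block_of by blast
    moreover have "card (block_of ` I) \<le> card (block_of ` X)"
      using I(2) \<open>finite X\<close> by (intro card_mono finite_imageI image_mono)
    ultimately show ?thesis using I(1) by (simp add: card_image)
  qed
  \<comment> \<open>One representative from each block meeting X.\<close>
  define I where "I = inv_into X block_of ` block_of ` X"
  have "I \<subseteq> X" unfolding I_def by (auto intro: inv_into_into)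
  moreover have "inj_on block_of I"
    unfolding I_def by (rule inj_onI) (auto simp: f_inv_into_f)
  ultimately have "partial_transversal C I"
    using X partial_transversal_iff_inj_on_block_of[of I] by (meson order_trans)
  moreover have "card I = card (block_of ` X)"
    unfolding I_def by (simp add: card_image inj_on_inv_into)
  ultimately have "card (block_of ` X) \<in> ?ranks"
    using \<open>I \<subseteq> X\<close> by (metis (mono_tags, lifting) mem_Collect_eq)
  moreover have "finite ?ranks"
    using bounded by (meson atMost_iff finite_atMost finite_subset subsetI)
  ultimately show ?thesis unfolding trank_def using bounded by (intro Max_eqI) auto
qed

lemma tcl_eq_SH:
  assumes X: "X \<subseteq> E" and "finite X"
  shows "tcl C E X = SH C X"
proof (intro set_eqI)
  fix a
  have "block_of a \<inter> X \<noteq> {} \<longleftrightarrow> block_of a \<in> block_of ` X" if "a \<in> E"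
    unfolding image_iff using that X mem_block_of_iff by blast
  moreover have "card (block_of ` insert a X) = card (block_of ` X)
      \<longleftrightarrow> block_of a \<in> block_of ` X"
    using \<open>finite X\<close> by (auto simp: insert_absorb card_insert_if)
  ultimately show "a \<in> tcl C E X \<longleftrightarrow> a \<in> SH C X"
    using X \<open>finite X\<close> by (auto simp: tcl_def SH_eq trank_eq_card_blocks)
qed

lemma closed_H_SH: "finite E \<Longrightarrow> closed_H E (SH C) = tflats C E"
  unfolding closed_H_def tflats_def using tcl_eq_SH finite_subset by blast

end

theorem theorem13:
  fixes E :: "'a set" and C :: "'a set set"
  assumes "finite E" and "partition_on E C"
  shows "matroid_closure E (SH C) \<and> matroid_closure E (XH C E) \<and> matroid_closure E (VH C E)
    \<and> indep_H E (SH C) = ptrans C E \<and> indep_H E (XH C E) = ptrans C E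
    \<and> indep_H E (VH C E) = ptrans C E
    \<and> closed_H E (SH C) = tflats C E \<and> closed_H E (XH C E) = tflats C E
    \<and> closed_H E (VH C E) = tflats C E"
proof -
  interpret block_partition E C using assms(2) by unfold_locales
  show ?thesis
    using matroid_closure_SH indep_H_SH closed_H_SH[OF assms(1)]
    by (simp add: XH_eq_SH VH_eq_SH)
qed

end
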